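(* Let $S=(s_{ij})$ be an irreducible $k\times k$ matrix with nonnegative integer entries. If the system of equations $n_is_{ij}=n_js_{ji}$ ($1\le i,j\le k$) has a non-trivial solution $(n_1,\dots,n_k)$, then there exists a connected $S$-regular graph.
   Context: A square matrix is irreducible if its associated directed graph (an arc $i\to j$ iff the $(i,j)$ entry is nonzero) is strongly connected. A simple undirected graph $G=(V,E)$ is $S$-regular if $V$ has a partition into nonempty cells $V_1,\dots,V_k$ such that every vertex $v\in V_i$ has exactly $s_{ij}$ neighbours in $V_j$, for all $i,j$. *)

theory Defs
  imports Complex_Main
begin

text \<open>A k x k matrix is represented as S :: nat => nat => nat, indices in {0..<k}.\<close>

definition mat_digraph :: "nat \<Rightarrow> (nat \<Rightarrow> nat \<Rightarrow> nat) \<Rightarrow> (nat \<times> nat) set" where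
  "mat_digraph k S = {(i, j). i < k \<and> j < k \<and> S i j \<noteq> 0}"

definition irreducible_mat :: "nat \<Rightarrow> (nat \<Rightarrow> nat \<Rightarrow> nat) \<Rightarrow> bool" where
  "irreducible_mat k S \<longleftrightarrow> (\<forall>i<k. \<forall>j<k. (i, j) \<in> (mat_digraph k S)\<^sup>*)"

definition simple_graph :: "'a set \<Rightarrow> ('a \<Rightarrow> 'a \<Rightarrow> bool) \<Rightarrow> bool" where
  "simple_graph V E \<longleftrightarrow> finite V \<and> (\<forall>u v. E u v \<longrightarrow> u \<in> V \<and> v \<in> V)
     \<and> (\<forall>u v. E u v \<longrightarrow> E v u) \<and> (\<forall>v. \<not> E v v)"

definition connected_graph :: "'a set \<Rightarrow> ('a \<Rightarrow> 'a \<Rightarrow> bool) \<Rightarrow> bool" where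
  "connected_graph V E \<longleftrightarrow> V \<noteq> {} \<and>
     (\<forall>u\<in>V. \<forall>w\<in>V. (u, w) \<in> {(x, y). x \<in> V \<and> y \<in> V \<and> E x y}\<^sup>*)"

text \<open>S-regular: a partition of V into nonempty cells V_0..V_(k-1), given by the cell map c
  (v belongs to cell c v), such that each v in cell i has exactly S i j neighbours in cell j.\<close>
definition S_regular :: "nat \<Rightarrow> (nat \<Rightarrow> nat \<Rightarrow> nat) \<Rightarrow> 'a set \<Rightarrow> ('a \<Rightarrow> 'a \<Rightarrow> bool) \<Rightarrow> bool" where
  "S_regular k S V E \<longleftrightarrow> (\<exists>c :: 'a \<Rightarrow> nat.
     (\<forall>v\<in>V. c v < k) \<and> (\<forall>i<k. \<exists>v\<in>V. c v = i) \<and>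
     (\<forall>v\<in>V. \<forall>j<k. card {w \<in> V. E v w \<and> c w = j} = S (c v) j))"

end

theory Submission
  imports Defs "HOL-Library.Countable"
begin

(* Along an arc i -> j of the digraph of S a solution satisfies n_j = n_i s_ij / s_ji, so by
   irreducibility a nonzero solution is, up to a factor, positive and rational, hence can be taken
   to consist of positive integers h_i with s_ij <= h_j. Give cell i two halves of h_i vertices
   and join the first half of cell i to the second half of cell j by a bipartite graph in which
   the vertices of cell i have degree s_ij and those of cell j have degree s_ji; it exists since
   both sides count h_i s_ij = h_j s_ji edges. Every connected component of this S-regular graph
   is again S-regular, because irreducibility forces it to meet every cell. *)

definition balanced_weights :: "nat \<Rightarrow> (nat \<Rightarrow> nat \<Rightarrow> nat) \<Rightarrow> (nat \<Rightarrow> 'a::semiring_1) \<Rightarrow> bool" where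
  "balanced_weights k S n \<longleftrightarrow> (\<forall>i<k. \<forall>j<k. n i * of_nat (S i j) = n j * of_nat (S j i))"

lemma balanced_weights_positive_rational:
  fixes q :: "nat \<Rightarrow> real"
  assumes irr: "irreducible_mat k S" and bal: "balanced_weights k S q"
    and r: "r < k" "q r \<in> \<rat>" "0 < q r" and "j < k"
  shows "q j \<in> \<rat> \<and> 0 < q j"
proof -
  have "(r, j) \<in> (mat_digraph k S)\<^sup>*"
    using irr r \<open>j < k\<close> unfolding irreducible_mat_def by blast
  then show ?thesis
  proof (induction rule: rtrancl_induct)
    case base
    then show ?case using r by simp
  next
    case (step i l)
    then have il: "i < k" "l < k" "S i l \<noteq> 0"
      unfolding mat_digraph_def by auto
    have eq: "q l * S l i = q i * S i l"
      using bal il unfolding balanced_weights_def by auto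
    have "0 < q i * S i l"
      using step.IH il by simp
    then have "S l i \<noteq> 0"
      using eq by (cases "S l i = 0") auto
    then have "q l = q i * S i l / S l i"
      using eq by (simp add: field_simps)
    then show ?case
      using step.IH il \<open>S l i \<noteq> 0\<close> by simp
  qed
qed

lemma Rats_common_denominator:
  fixes q :: "'a \<Rightarrow> real"
  assumes "finite I" and "\<forall>i\<in>I. q i \<in> \<rat>"
  shows "\<exists>D::nat. 0 < D \<and> (\<forall>i\<in>I. q i * D \<in> \<int>)"
  using assms
proof (induction I rule: finite_induct)
  case empty
  show ?case by (intro exI[of _ 1]) simp
next
  case (insert i I)
  then obtain D :: nat where D: "0 < D" "\<forall>j\<in>I. q j * D \<in> \<int>"
    by auto
  obtain a b :: int where ab: "0 < b" "q i = of_int a / of_int b"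
    using insert.prems by (auto elim: Rats_cases')
  have "q i * (D * nat b) = of_int (a * D)"
    using ab by simp
  moreover have "q j * (D * nat b) \<in> \<int>" if "j \<in> I" for j
    using D that ab by (metis Ints_mult Ints_of_int mult.assoc of_int_of_nat_eq of_nat_mult)
  ultimately show ?case
    using D ab by (intro exI[of _ "D * nat b"]) auto
qed

lemma exists_positive_nat_balanced_weights:
  fixes n :: "nat \<Rightarrow> real"
  assumes irr: "irreducible_mat k S" and bal: "balanced_weights k S n"
    and r: "r < k" "n r \<noteq> 0"
  shows "\<exists>m :: nat \<Rightarrow> nat. (\<forall>i<k. 0 < m i) \<and> balanced_weights k S m"
proof -
  define q where "q j = n j / n r" for j
  have bal_q: "balanced_weights k S q"
    using bal r unfolding balanced_weights_def q_def by (metis times_divide_eq_left)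
  have q: "q j \<in> \<rat> \<and> 0 < q j" if "j < k" for j
    using balanced_weights_positive_rational[OF irr bal_q r(1) _ _ that] r unfolding q_def by simp
  obtain D :: nat where D: "0 < D" "\<forall>j\<in>{..<k}. q j * D \<in> \<int>"
    using Rats_common_denominator[of "{..<k}" q] q by auto
  define m where "m j = nat \<lfloor>q j * D\<rfloor>" for j
  have m: "real (m j) = q j * D" "0 < m j" if jk: "j < k" for j
  proof -
    obtain z where z: "q j * D = of_int z"
      using D(2) jk by (meson Ints_cases lessThan_iff)
    moreover have "0 < z"
      using z q[OF jk] D by (metis of_int_0_less_iff of_nat_0_less_iff mult_pos_pos)
    ultimately show "real (m j) = q j * D" "0 < m j"
      unfolding m_def by simp_all
  qed
  have "balanced_weights k S m"
    unfolding balanced_weights_def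
  proof (intro allI impI)
    fix i j assume "i < k" "j < k"
    then have "real (m i * S i j) = real (m j * S j i)"
      using m bal_q unfolding balanced_weights_def by (simp add: algebra_simps)
    then show "m i * of_nat (S i j) = m j * of_nat (S j i)"
      by (simp only: of_nat_eq_iff of_nat_id)
  qed
  then show ?thesis using m by blast
qed

lemma exists_dominating_balanced_weights:
  fixes m :: "nat \<Rightarrow> nat"
  assumes pos: "\<forall>i<k. 0 < m i" and bal: "balanced_weights k S m"
  shows "\<exists>h :: nat \<Rightarrow> nat. (\<forall>i<k. 0 < h i) \<and> (\<forall>i<k. \<forall>j<k. S i j \<le> h j) \<and> balanced_weights k S h"
proof -
  define M where "M = Suc (\<Sum>i<k. \<Sum>j<k. S i j)"
  have S_le: "S i j \<le> M" if "i < k" "j < k" for i j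
  proof -
    have "S i j \<le> (\<Sum>j<k. S i j)"
      using that by (intro member_le_sum) auto
    also have "\<dots> \<le> (\<Sum>i<k. \<Sum>j<k. S i j)"
      using that by (intro member_le_sum[where f = "\<lambda>i. \<Sum>j<k. S i j"]) auto
    finally show ?thesis unfolding M_def by simp
  qed
  have "S i j \<le> m j * M" if "i < k" "j < k" for i j
  proof -
    have "0 < m j"
      using pos that by blast
    then have "M \<le> m j * M"
      by simp
    then show ?thesis
      using S_le[OF that] by linarith
  qed
  moreover have "balanced_weights k S (\<lambda>i. m i * M)"
    using bal unfolding balanced_weights_def by (metis mult.assoc mult.commute)
  ultimately show ?thesis
    using pos by (intro exI[of _ "\<lambda>i. m i * M"]) (simp add: M_def)
qed

(* Left vertex x receives the s consecutive edge numbers x s, ..., x s + s - 1, whose residues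
   mod b are distinct when s <= b; right vertex y receives the edge numbers congruent to y mod b. *)
definition biregular_adj :: "nat \<Rightarrow> nat \<Rightarrow> nat \<Rightarrow> nat \<Rightarrow> nat \<Rightarrow> bool" where
  "biregular_adj a b s x y \<longleftrightarrow> (\<exists>t < a * s. x = t div s \<and> y = t mod b)"

lemma inj_on_mod_interval:
  fixes b c s :: nat
  assumes "s \<le> b"
  shows "inj_on (\<lambda>t. t mod b) {c..<c + s}"
proof (rule inj_onI)
  fix t t' assume t: "t \<in> {c..<c + s}" "t' \<in> {c..<c + s}" and mod: "t mod b = t' mod b"
  show "t = t'"
  proof (rule ccontr)
    assume "t \<noteq> t'"
    then have "0 < max t t' - min t t'" "max t t' - min t t' < b"
      using t assms by auto
    moreover have "b dvd max t t' - min t t'"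
      using mod mod_eq_dvd_iff_nat[of t t' b] mod_eq_dvd_iff_nat[of t' t b]
      by (auto simp: max_def min_def)
    ultimately show False
      using nat_dvd_not_less by blast
  qed
qed

lemma card_biregular_adj_left:
  assumes "x < a" and "s \<le> b"
  shows "card {y. y < b \<and> biregular_adj a b s x y} = s"
proof (cases "s = 0")
  case True
  then show ?thesis unfolding biregular_adj_def by simp
next
  case False
  have "{y. y < b \<and> biregular_adj a b s x y} = (\<lambda>t. t mod b) ` {x * s..<x * s + s}"
  proof (intro set_eqI iffI)
    fix y assume "y \<in> {y. y < b \<and> biregular_adj a b s x y}"
    then obtain t where "x = t div s" "y = t mod b"
      unfolding biregular_adj_def by auto
    moreover have "t = x * s + t mod s" "t mod s < s"
      using \<open>x = t div s\<close> False by simp_all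
    then have "t \<in> {x * s..<x * s + s}"
      by (simp only: atLeastLessThan_iff) linarith
    ultimately show "y \<in> (\<lambda>t. t mod b) ` {x * s..<x * s + s}"
      by blast
  next
    fix y assume "y \<in> (\<lambda>t. t mod b) ` {x * s..<x * s + s}"
    then obtain t where t: "x * s \<le> t" "t < x * s + s" "y = t mod b"
      by auto
    have "t div s = x"
      using t False by (intro div_nat_eqI) (auto simp: algebra_simps)
    moreover have "Suc x * s \<le> a * s"
      using assms(1) by (intro mult_le_mono1) simp
    then have "t < a * s"
      using t(2) by simp
    moreover have "y < b"
      using t(3) False assms(2) by simp
    ultimately show "y \<in> {y. y < b \<and> biregular_adj a b s x y}"
      using t(3) unfolding biregular_adj_def by auto
  qed
  then show ?thesis
    using inj_on_mod_interval[OF assms(2)] by (simp add: card_image)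
qed

lemma card_biregular_adj_right:
  assumes "y < b" and "s \<le> b" and "a * s = b * s'"
  shows "card {x. x < a \<and> biregular_adj a b s x y} = s'"
proof (cases "s = 0")
  case True
  then show ?thesis
    using assms unfolding biregular_adj_def by simp
next
  case False
  have "{x. x < a \<and> biregular_adj a b s x y} = (\<lambda>l. (y + l * b) div s) ` {..<s'}"
  proof (intro set_eqI iffI)
    fix x assume "x \<in> {x. x < a \<and> biregular_adj a b s x y}"
    then obtain t where t: "t < b * s'" "x = t div s" "y = t mod b"
      using assms(3) unfolding biregular_adj_def by auto
    then have "t div b < s'"
      by (metis less_mult_imp_div_less mult.commute)
    moreover have "t = y + t div b * b"
      using t(3) by simp
    ultimately show "x \<in> (\<lambda>l. (y + l * b) div s) ` {..<s'}"
      using t(2) by (intro image_eqI[of _ _ "t div b"]) auto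
  next
    fix x assume "x \<in> (\<lambda>l. (y + l * b) div s) ` {..<s'}"
    then obtain l where l: "l < s'" "x = (y + l * b) div s"
      by auto
    have "y + l * b < b * Suc l"
      using assms(1) by simp
    also have "\<dots> \<le> a * s"
      using l(1) assms(3) by (metis Suc_leI mult_le_mono2)
    finally have "y + l * b < a * s" .
    moreover have "(y + l * b) mod b = y"
      using assms(1) by simp
    ultimately show "x \<in> {x. x < a \<and> biregular_adj a b s x y}"
      using l(2) False unfolding biregular_adj_def by (auto simp: div_less_iff_less_mult)
  qed
  moreover have "strict_mono (\<lambda>l. (y + l * b) div s)"
    unfolding strict_mono_Suc_iff
  proof
    fix l
    have "(y + l * b) div s < (y + l * b + s) div s"
      using False by simp
    also have "\<dots> \<le> (y + Suc l * b) div s"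
      using assms(2) by (intro div_le_mono) simp
    finally show "(y + l * b) div s < (y + Suc l * b) div s" .
  qed
  ultimately show ?thesis
    by (simp add: card_image strict_mono_imp_inj_on)
qed

(* (i, e, x) is vertex x of half e of cell i. Edges only join half True to half False, which
   rules out loops also for i = j. *)
fun cell_adj :: "(nat \<Rightarrow> nat) \<Rightarrow> (nat \<Rightarrow> nat \<Rightarrow> nat) \<Rightarrow> nat \<times> bool \<times> nat \<Rightarrow> nat \<times> bool \<times> nat \<Rightarrow> bool" where
  "cell_adj h S (i, True, x) (j, False, y) = biregular_adj (h i) (h j) (S i j) x y"
| "cell_adj h S (i, False, x) (j, True, y) = biregular_adj (h j) (h i) (S j i) y x"
| "cell_adj h S _ _ = False"

lemma cell_adj_sym: "cell_adj h S u v = cell_adj h S v u"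
  by (cases "(h, S, u, v)" rule: cell_adj.cases) auto

lemma S_regular_graph_of_cell_sizes:
  fixes h :: "nat \<Rightarrow> nat"
  assumes pos: "\<forall>i<k. 0 < h i" and le: "\<forall>i<k. \<forall>j<k. S i j \<le> h j"
    and bal: "balanced_weights k S h"
  defines "V \<equiv> {(i, e, x). i < k \<and> x < h i}"
  shows "simple_graph V (\<lambda>u v. u \<in> V \<and> v \<in> V \<and> cell_adj h S u v)"
    and "S_regular k S V (\<lambda>u v. u \<in> V \<and> v \<in> V \<and> cell_adj h S u v)"
proof -
  show "simple_graph V (\<lambda>u v. u \<in> V \<and> v \<in> V \<and> cell_adj h S u v)"
    unfolding simple_graph_def
  proof (intro conjI allI impI)
    show "finite V"
    proof (rule finite_subset)
      show "V \<subseteq> {..<k} \<times> UNIV \<times> {..<Max (h ` {..<k})}"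
        unfolding V_def by (auto intro: less_le_trans[OF _ Max_ge])
    qed simp
  next
    fix v show "\<not> (v \<in> V \<and> v \<in> V \<and> cell_adj h S v v)"
      by (cases "(h, S, v, v)" rule: cell_adj.cases) auto
  qed (auto simp: cell_adj_sym)
  show "S_regular k S V (\<lambda>u v. u \<in> V \<and> v \<in> V \<and> cell_adj h S u v)"
    unfolding S_regular_def
  proof (intro exI[of _ fst] conjI ballI allI impI)
    fix i assume "i < k"
    then show "\<exists>v\<in>V. fst v = i"
      using pos unfolding V_def by (intro bexI[of _ "(i, True, 0)"]) auto
  next
    fix v j assume "v \<in> V" "j < k"
    then obtain i e x where v: "v = (i, e, x)" "i < k" "x < h i"
      unfolding V_def by auto
    show "card {w \<in> V. (v \<in> V \<and> w \<in> V \<and> cell_adj h S v w) \<and> fst w = j} = S (fst v) j"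
    proof (cases e)
      case True
      then have "{w \<in> V. (v \<in> V \<and> w \<in> V \<and> cell_adj h S v w) \<and> fst w = j}
          = (\<lambda>y. (j, False, y)) ` {y. y < h j \<and> biregular_adj (h i) (h j) (S i j) x y}"
        using v \<open>j < k\<close> unfolding V_def by (auto elim: cell_adj.elims)
      then show ?thesis
        using card_biregular_adj_left[OF v(3)] le v \<open>j < k\<close> by (simp add: card_image inj_on_def)
    next
      case False
      then have "{w \<in> V. (v \<in> V \<and> w \<in> V \<and> cell_adj h S v w) \<and> fst w = j}
          = (\<lambda>y. (j, True, y)) ` {y. y < h j \<and> biregular_adj (h j) (h i) (S j i) y x}"
        using v \<open>j < k\<close> unfolding V_def by (auto elim: cell_adj.elims)
      moreover have "h j * S j i = h i * S i j"
        using bal v \<open>j < k\<close> unfolding balanced_weights_def by simp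
      ultimately show ?thesis
        using card_biregular_adj_right[OF v(3)] le v \<open>j < k\<close> by (simp add: card_image inj_on_def)
    qed
  qed (auto simp: V_def)
qed

definition adj_rel :: "'a set \<Rightarrow> ('a \<Rightarrow> 'a \<Rightarrow> bool) \<Rightarrow> ('a \<times> 'a) set" where
  "adj_rel V E = {(x, y). x \<in> V \<and> y \<in> V \<and> E x y}"

lemma connected_graph_iff_adj_rel:
  "connected_graph V E \<longleftrightarrow> V \<noteq> {} \<and> (\<forall>u\<in>V. \<forall>w\<in>V. (u, w) \<in> (adj_rel V E)\<^sup>*)"
  unfolding connected_graph_def adj_rel_def ..

lemma S_regular_closed_subgraph:
  assumes sr: "S_regular k S V E" and irr: "irreducible_mat k S"
    and C: "C \<subseteq> V" "v0 \<in> C" and closed: "\<And>x y. x \<in> C \<Longrightarrow> E x y \<Longrightarrow> y \<in> C"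
  shows "S_regular k S C (\<lambda>x y. E x y \<and> x \<in> C \<and> y \<in> C)"
proof -
  obtain c where c_lt: "\<forall>v\<in>V. c v < k"
    and deg: "\<forall>v\<in>V. \<forall>j<k. card {w \<in> V. E v w \<and> c w = j} = S (c v) j"
    using sr unfolding S_regular_def by blast
  have nbrs: "{w \<in> C. (E v w \<and> v \<in> C \<and> w \<in> C) \<and> c w = j} = {w \<in> V. E v w \<and> c w = j}"
    if "v \<in> C" for v j
    using that C closed by auto
  have "\<exists>v\<in>C. c v = j" if "(i, j) \<in> (mat_digraph k S)\<^sup>*" "\<exists>v\<in>C. c v = i" for i j
    using that
  proof (induction rule: rtrancl_induct)
    case (step j l)
    then obtain v where v: "v \<in> C" "c v = j"
      by blast
    have "S j l \<noteq> 0" "l < k"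
      using step.hyps(2) unfolding mat_digraph_def by auto
    moreover have "card {w \<in> V. E v w \<and> c w = l} = S j l"
      using deg v C \<open>l < k\<close> by auto
    ultimately have "{w \<in> V. E v w \<and> c w = l} \<noteq> {}"
      by (metis card.empty)
    then show ?case
      using closed v by blast
  qed
  moreover have "(c v0, i) \<in> (mat_digraph k S)\<^sup>*" if "i < k" for i
    using irr c_lt C that unfolding irreducible_mat_def by blast
  ultimately show ?thesis
    unfolding S_regular_def using C c_lt deg nbrs by (intro exI[of _ c]) auto
qed

lemma connected_component_subgraph:
  assumes sg: "simple_graph V E" and "v0 \<in> V"
  defines "C \<equiv> (adj_rel V E)\<^sup>* `` {v0}"
  shows "C \<subseteq> V" and "\<And>x y. x \<in> C \<Longrightarrow> E x y \<Longrightarrow> y \<in> C"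
    and "simple_graph C (\<lambda>x y. E x y \<and> x \<in> C \<and> y \<in> C)"
    and "connected_graph C (\<lambda>x y. E x y \<and> x \<in> C \<and> y \<in> C)"
proof -
  let ?R = "adj_rel V E" and ?E = "\<lambda>x y. E x y \<and> x \<in> C \<and> y \<in> C"
  have R: "(x, y) \<in> ?R \<longleftrightarrow> E x y" for x y
    using sg unfolding simple_graph_def adj_rel_def by auto
  show sub: "C \<subseteq> V"
    using Image_closed_trancl[of ?R V] \<open>v0 \<in> V\<close> unfolding C_def adj_rel_def by blast
  show closed: "y \<in> C" if "x \<in> C" "E x y" for x y
    using that R unfolding C_def by (auto intro: rtrancl_into_rtrancl)
  show "simple_graph C ?E"
    using sg sub finite_subset unfolding simple_graph_def by blast
  have to_C: "(v0, w) \<in> (adj_rel C ?E)\<^sup>*" if "w \<in> C" for w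
  proof -
    have "(v0, w) \<in> ?R\<^sup>*"
      using that unfolding C_def by blast
    then show ?thesis
    proof (induction rule: rtrancl_induct)
      case (step y z)
      then have "y \<in> C" "z \<in> C"
        unfolding C_def by (auto intro: rtrancl_into_rtrancl)
      then have "(y, z) \<in> adj_rel C ?E"
        using step.hyps(2) R unfolding adj_rel_def by blast
      with step.IH show ?case
        by (rule rtrancl_into_rtrancl)
    qed simp
  qed
  have "sym (adj_rel C ?E)"
    using sg unfolding sym_def adj_rel_def simple_graph_def by blast
  then have from_C: "(w, v0) \<in> (adj_rel C ?E)\<^sup>*" if "w \<in> C" for w
    using to_C[OF that] sym_rtrancl by (blast dest: symD)
  have "v0 \<in> C"
    unfolding C_def by simp
  then show "connected_graph C ?E"
    unfolding connected_graph_iff_adj_rel using from_C to_C by (meson empty_iff rtrancl_trans)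
qed

lemma inj_on_image_graph:
  assumes inj: "inj_on f V" and sg: "simple_graph V E"
  defines "E' \<equiv> \<lambda>x y. x \<in> f ` V \<and> y \<in> f ` V \<and> E (inv_into V f x) (inv_into V f y)"
  shows "simple_graph (f ` V) E'"
    and "connected_graph V E \<Longrightarrow> connected_graph (f ` V) E'"
    and "S_regular k S V E \<Longrightarrow> S_regular k S (f ` V) E'"
proof -
  have inv: "inv_into V f (f v) = v" if "v \<in> V" for v
    using inj that by simp
  have E': "E' (f u) (f v) \<longleftrightarrow> E u v" if "u \<in> V" "v \<in> V" for u v
    using that inv unfolding E'_def by auto
  show "simple_graph (f ` V) E'"
    using sg unfolding simple_graph_def E'_def by auto
  show "connected_graph (f ` V) E'" if "connected_graph V E"
    unfolding connected_graph_iff_adj_rel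
  proof (intro conjI ballI)
    show "f ` V \<noteq> {}"
      using that unfolding connected_graph_def by simp
  next
    fix x y assume "x \<in> f ` V" "y \<in> f ` V"
    then obtain u v where uv: "u \<in> V" "v \<in> V" "x = f u" "y = f v"
      by blast
    have "(u, v) \<in> (adj_rel V E)\<^sup>*"
      using that uv unfolding connected_graph_iff_adj_rel by blast
    then have "(f u, f v) \<in> (adj_rel (f ` V) E')\<^sup>*"
    proof (induction rule: rtrancl_induct)
      case (step v w)
      then have "(f v, f w) \<in> adj_rel (f ` V) E'"
        using E' unfolding adj_rel_def by auto
      with step.IH show ?case
        by (rule rtrancl_into_rtrancl)
    qed simp
    then show "(x, y) \<in> (adj_rel (f ` V) E')\<^sup>*"
      using uv by simp
  qed
  show "S_regular k S (f ` V) E'" if sr: "S_regular k S V E"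
  proof -
    obtain c where c: "\<forall>v\<in>V. c v < k" "\<forall>i<k. \<exists>v\<in>V. c v = i"
      and deg: "\<forall>v\<in>V. \<forall>j<k. card {w \<in> V. E v w \<and> c w = j} = S (c v) j"
      using sr unfolding S_regular_def by blast
    have "{w \<in> f ` V. E' (f v) w \<and> c (inv_into V f w) = j} = f ` {w \<in> V. E v w \<and> c w = j}"
      if "v \<in> V" for v j
      using that inv E' by force
    moreover have "inj_on f {w \<in> V. E v w \<and> c w = j}" for v j
      using inj by (rule inj_on_subset) blast
    ultimately show ?thesis
      unfolding S_regular_def using c deg inv
      by (intro exI[of _ "c \<circ> inv_into V f"]) (auto simp: card_image)
  qed
qed

lemma exists_S_regular_graph:
  fixes m :: "nat \<Rightarrow> nat"
  assumes "\<forall>i<k. 0 < m i" and "balanced_weights k S m"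
  shows "\<exists>(V :: (nat \<times> bool \<times> nat) set) E. simple_graph V E \<and> S_regular k S V E"
proof -
  obtain h :: "nat \<Rightarrow> nat" where h: "\<forall>i<k. 0 < h i" "\<forall>i<k. \<forall>j<k. S i j \<le> h j" "balanced_weights k S h"
    using exists_dominating_balanced_weights[OF assms] by blast
  show ?thesis
    using S_regular_graph_of_cell_sizes[OF h] by blast
qed

lemma exists_connected_S_regular_graph:
  fixes V :: "'a set"
  assumes sg: "simple_graph V E" and sr: "S_regular k S V E"
    and irr: "irreducible_mat k S" and "0 < k"
  shows "\<exists>(C :: 'a set) E'. simple_graph C E' \<and> connected_graph C E' \<and> S_regular k S C E'"
proof -
  obtain v0 where v0: "v0 \<in> V"
    using sr \<open>0 < k\<close> unfolding S_regular_def by blast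
  define C where "C = (adj_rel V E)\<^sup>* `` {v0}"
  note component = connected_component_subgraph[OF sg v0, folded C_def]
  have "v0 \<in> C"
    unfolding C_def by simp
  then have "S_regular k S C (\<lambda>x y. E x y \<and> x \<in> C \<and> y \<in> C)"
    by (rule S_regular_closed_subgraph[OF sr irr component(1) _ component(2)])
  then show ?thesis
    using component(3,4) by blast
qed

lemma exists_connected_S_regular_graph_on_nat:
  fixes V :: "'a::countable set"
  assumes "simple_graph V E" and "connected_graph V E" and "S_regular k S V E"
  shows "\<exists>(V' :: nat set) E'. simple_graph V' E' \<and> connected_graph V' E' \<and> S_regular k S V' E'"
proof -
  have "inj_on to_nat V"
    using inj_to_nat subset_UNIV by (rule inj_on_subset)
  note relabelled = inj_on_image_graph[OF this assms(1)]
  show ?thesis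
    using relabelled(1) relabelled(2)[OF assms(2)] relabelled(3)[OF assms(3)] by blast
qed

theorem mainTheorem2:
  fixes k :: nat and S :: "nat \<Rightarrow> nat \<Rightarrow> nat"
  assumes irr: "irreducible_mat k S"
    and sol: "\<exists>n :: nat \<Rightarrow> real. (\<exists>i<k. n i \<noteq> 0) \<and>
                 (\<forall>i<k. \<forall>j<k. n i * real (S i j) = n j * real (S j i))"
  shows "\<exists>(V :: nat set) E. simple_graph V E \<and> connected_graph V E \<and> S_regular k S V E"
proof -
  obtain n :: "nat \<Rightarrow> real" and r where r: "r < k" "n r \<noteq> 0"
    and "\<forall>i<k. \<forall>j<k. n i * real (S i j) = n j * real (S j i)"
    using sol by blast
  then have bal: "balanced_weights k S n"
    unfolding balanced_weights_def by simp
  obtain m :: "nat \<Rightarrow> nat" where "\<forall>i<k. 0 < m i" "balanced_weights k S m"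
    using exists_positive_nat_balanced_weights[OF irr bal r] by blast
  then obtain V :: "(nat \<times> bool \<times> nat) set" and E
    where "simple_graph V E" "S_regular k S V E"
    using exists_S_regular_graph by blast
  then obtain C :: "(nat \<times> bool \<times> nat) set" and E'
    where "simple_graph C E'" "connected_graph C E'" "S_regular k S C E'"
    using exists_connected_S_regular_graph[OF _ _ irr] r(1) by blast
  then show ?thesis
    by (rule exists_connected_S_regular_graph_on_nat)
qed

end
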